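(* For any causal order $\Omega$ on a finite set $E$ and any family $\underline{I}=(I_\omega)_{\omega\in E}$ of non-empty finite sets, $\mathrm{Hist}(\Omega,\underline I)$ is a $\vee$-prime subset of the set of partial functions on $\underline I$.
   Context: A causal order $\Omega$ on $E$ is a preorder $\le_\Omega$; $\downarrow\omega=\{\xi:\xi\le_\Omega\omega\}$. Partial functions on $\underline I$: functions $f$ with $\mathrm{dom}(f)\subseteq E$ and $f(\omega)\in I_\omega$. $\mathrm{Hist}(\Omega,\underline I)=\bigcup_{\xi\in E}\prod_{\omega\in\downarrow\xi}I_\omega$. Two partial functions are compatible if they agree on the intersection of their domains; a compatible set $\mathcal F$ has join $\bigvee\mathcal F$, the partial function on $\bigcup_{f\in\mathcal F}\mathrm{dom}(f)$ extending every member. A set $\Theta$ of partial functions is $\vee$-prime if for every compatible $\mathcal F\subseteq\Theta$ with $\bigvee\mathcal F\in\Theta$ we have $\bigvee\mathcal F\in\mathcal F$. *)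

theory Defs
  imports Main
begin

definition causal_order :: "'a set \<Rightarrow> ('a \<Rightarrow> 'a \<Rightarrow> bool) \<Rightarrow> bool" where
  "causal_order E le \<longleftrightarrow>
     (\<forall>x\<in>E. le x x) \<and> (\<forall>x\<in>E. \<forall>y\<in>E. \<forall>z\<in>E. le x y \<longrightarrow> le y z \<longrightarrow> le x z)"

definition down :: "'a set \<Rightarrow> ('a \<Rightarrow> 'a \<Rightarrow> bool) \<Rightarrow> 'a \<Rightarrow> 'a set" where
  "down E le w = {x \<in> E. le x w}"

definition partial_funs :: "'a set \<Rightarrow> ('a \<Rightarrow> 'b set) \<Rightarrow> ('a \<rightharpoonup> 'b) set" where
  "partial_funs E I = {f. dom f \<subseteq> E \<and> (\<forall>w\<in>dom f. the (f w) \<in> I w)}"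

definition Hist :: "'a set \<Rightarrow> ('a \<Rightarrow> 'a \<Rightarrow> bool) \<Rightarrow> ('a \<Rightarrow> 'b set) \<Rightarrow> ('a \<rightharpoonup> 'b) set" where
  "Hist E le I = (\<Union>xi\<in>E. {h. dom h = down E le xi \<and> (\<forall>w\<in>dom h. the (h w) \<in> I w)})"

definition compatible :: "('a \<rightharpoonup> 'b) set \<Rightarrow> bool" where
  "compatible F \<longleftrightarrow> (\<forall>f\<in>F. \<forall>g\<in>F. \<forall>x\<in>dom f \<inter> dom g. f x = g x)"

definition join :: "('a \<rightharpoonup> 'b) set \<Rightarrow> ('a \<rightharpoonup> 'b)" where
  "join F = (\<lambda>x. if \<exists>f\<in>F. x \<in> dom f then (SOME f. f \<in> F \<and> x \<in> dom f) x else None)"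

definition vee_prime :: "('a \<rightharpoonup> 'b) set \<Rightarrow> bool" where
  "vee_prime \<Theta> \<longleftrightarrow> (\<forall>F. F \<subseteq> \<Theta> \<longrightarrow> compatible F \<longrightarrow> join F \<in> \<Theta> \<longrightarrow> join F \<in> F)"

end

theory Submission
  imports Defs
begin

(* The domain of the join of F is a down-set \<down>\<xi>. Since \<xi> \<in> \<down>\<xi>, some member f of F is defined
   at \<xi>; its domain is a down-set \<down>\<xi>' containing \<xi>, hence \<down>\<xi> \<subseteq> \<down>\<xi>' by transitivity.
   So f is defined on the whole domain of the join, and compatibility forces f = \<Or>F. *)

lemma some_member_defined_at:
  assumes "f \<in> F" "x \<in> dom f"
  shows "(SOME g. g \<in> F \<and> x \<in> dom g) \<in> F \<and> x \<in> dom (SOME g. g \<in> F \<and> x \<in> dom g)"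
  using assms by (intro someI_ex[of "\<lambda>g. g \<in> F \<and> x \<in> dom g"]) blast

lemma join_apply_SOME:
  assumes "f \<in> F" "x \<in> dom f"
  shows "join F x = (SOME g. g \<in> F \<and> x \<in> dom g) x"
  unfolding join_def by (rule if_P) (use assms in blast)

lemma dom_join: "dom (join F) = (\<Union>f\<in>F. dom f)"
proof (intro equalityI subsetI)
  fix x assume "x \<in> dom (join F)"
  then show "x \<in> (\<Union>f\<in>F. dom f)"
    unfolding join_def by (auto split: if_splits)
next
  fix x assume "x \<in> (\<Union>f\<in>F. dom f)"
  then obtain f where f: "f \<in> F" "x \<in> dom f" by blast
  show "x \<in> dom (join F)"
    using some_member_defined_at[OF f] join_apply_SOME[OF f] by (metis domIff)
qed

lemma join_apply:
  assumes "compatible F" "f \<in> F" "x \<in> dom f"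
  shows "join F x = f x"
proof -
  let ?g = "SOME g. g \<in> F \<and> x \<in> dom g"
  have "?g \<in> F" "x \<in> dom ?g" using some_member_defined_at[OF assms(2,3)] by auto
  then have "?g x = f x" using assms unfolding compatible_def by blast
  then show ?thesis using join_apply_SOME[OF assms(2,3)] by simp
qed

lemma join_eq_member:
  assumes "compatible F" "f \<in> F" "dom (join F) \<subseteq> dom f"
  shows "join F = f"
proof
  fix x
  show "join F x = f x"
  proof (cases "x \<in> dom f")
    case True
    then show ?thesis by (rule join_apply[OF assms(1,2)])
  next
    case False
    with assms(3) have "x \<notin> dom (join F)" by blast
    with False show ?thesis by (simp add: domIff)
  qed
qed

lemma down_refl: "causal_order E le \<Longrightarrow> x \<in> E \<Longrightarrow> x \<in> down E le x"
  unfolding causal_order_def down_def by blast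

lemma down_mono:
  "causal_order E le \<Longrightarrow> y \<in> E \<Longrightarrow> x \<in> down E le y \<Longrightarrow> down E le x \<subseteq> down E le y"
  unfolding causal_order_def down_def by blast

lemma HistE:
  assumes "h \<in> Hist E le I"
  obtains \<xi> where "\<xi> \<in> E" "dom h = down E le \<xi>"
  using assms unfolding Hist_def by blast

lemma Hist_subset_partial_funs: "Hist E le I \<subseteq> partial_funs E I"
  unfolding Hist_def partial_funs_def down_def by auto

lemma vee_prime_Hist:
  assumes "causal_order E le"
  shows "vee_prime (Hist E le I)"
  unfolding vee_prime_def
proof (intro allI impI)
  fix F
  assume F_Hist: "F \<subseteq> Hist E le I" and "compatible F" and join_Hist: "join F \<in> Hist E le I"
  obtain \<xi> where "\<xi> \<in> E" and dom_join_down: "dom (join F) = down E le \<xi>"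
    using join_Hist by (rule HistE)
  then have "\<xi> \<in> dom (join F)" using down_refl[OF assms] by blast
  then obtain f where f: "f \<in> F" "\<xi> \<in> dom f" unfolding dom_join by blast
  with F_Hist have "f \<in> Hist E le I" by blast
  then obtain \<xi>' where "\<xi>' \<in> E" and dom_f_down: "dom f = down E le \<xi>'"
    by (rule HistE)
  have "dom (join F) \<subseteq> dom f"
    unfolding dom_join_down dom_f_down
    by (rule down_mono[OF assms \<open>\<xi>' \<in> E\<close>]) (use f(2) dom_f_down in blast)
  then have "join F = f" using join_eq_member \<open>compatible F\<close> f(1) by blast
  then show "join F \<in> F" using f(1) by simp
qed

theorem proposition3:
  fixes E :: "'a set" and le :: "'a \<Rightarrow> 'a \<Rightarrow> bool" and I :: "'a \<Rightarrow> 'b set"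
  assumes "finite E"
    and "causal_order E le"
    and "\<forall>w\<in>E. I w \<noteq> {} \<and> finite (I w)"
  shows "Hist E le I \<subseteq> partial_funs E I \<and> vee_prime (Hist E le I)"
  using Hist_subset_partial_funs vee_prime_Hist[OF assms(2)] by blast

end
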